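(* Let $A\in\mathbb{R}^{m\times n}$, $b\in\mathbb{R}^m$, $f(x)=\frac12\|Ax-b\|^2$, and let $x^k,x^{k-1}\in\mathbb{R}^n$ with $\nabla f(x^k)\neq 0$ and $x^k\neq x^{k-1}$. Let $g=\nabla f(x^k)/\|\nabla f(x^k)\|$, $d=(x^k-x^{k-1})/\|x^k-x^{k-1}\|$, $\epsilon=g^td$, and assume $\epsilon^2<1$. Let $S_{11}=g^tA^tAg$, $S_{12}=g^tA^tAd$, $S_{22}=d^tA^tAd$, $\eta_1=1-\epsilon^2$, $\eta_2=-S_{11}-S_{22}+2\epsilon S_{12}$, $\eta_3=S_{11}S_{22}-S_{12}^2$, $$\sigma=\frac{-\eta_2+\sqrt{\eta_2^2-4\eta_1\eta_3}}{2\eta_1},$$ let $(\tau,\rho)$ be the solution of $$\begin{pmatrix}1&\epsilon\\ \epsilon&1\end{pmatrix}\begin{pmatrix}\tau\\ \rho\end{pmatrix}=\begin{pmatrix}\sqrt{\sigma-S_{11}}\\ \sqrt{\sigma-S_{22}}\,\mathrm{sgn}(\epsilon\sigma-S_{12})\end{pmatrix},$$ and $u=\tau g+\rho d$. Then $H=\sigma\mathbf I-uu^t\succeq 0$.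
   Context: $\|\cdot\|$ denotes the Euclidean norm; $\mathrm{sgn}$ is the sign function; $\mathbf I$ is the identity; $\succeq 0$ means positive semidefinite. Under these assumptions $\eta_2^2-4\eta_1\eta_3\ge 0$ and $\sigma\ge S_{11},S_{22}$, so all quantities are real. *)

theory Defs
  imports "HOL-Analysis.Analysis"
begin

definition lsq :: "real^'n^'m \<Rightarrow> real^'m \<Rightarrow> real^'n \<Rightarrow> real" where
  "lsq A b x = (1/2) * (norm (A *v x - b))^2"

definition lsq_grad :: "real^'n^'m \<Rightarrow> real^'m \<Rightarrow> real^'n \<Rightarrow> real^'n" where
  "lsq_grad A b x = transpose A *v (A *v x - b)"

definition psd :: "real^'n^'n \<Rightarrow> bool" where
  "psd H \<longleftrightarrow> (\<forall>v. v \<bullet> (H *v v) \<ge> 0)"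

definition outer :: "real^'n \<Rightarrow> real^'n \<Rightarrow> real^'n^'n" where
  "outer u w = (\<chi> i j. u $ i * w $ j)"

end

theory Submission
  imports Defs "HOL-Library.Quadratic_Discriminant"
begin

text \<open>
  \<open>\<eta>1 s\<^sup>2 + \<eta>2 s + \<eta>3 = (s - S11) (s - S22) - (\<epsilon> s - S12)\<^sup>2\<close> is nonpositive at \<open>S11\<close>
  and \<open>S22\<close>, so its larger root \<open>\<sigma>\<close> satisfies \<open>\<sigma> \<ge> S11, S22\<close>. The linear system makes
  \<open>u \<bullet> g = \<surd>(\<sigma> - S11)\<close> and \<open>u \<bullet> d = \<plusminus>\<surd>(\<sigma> - S22)\<close> with \<open>(u \<bullet> g) (u \<bullet> d) = \<epsilon> \<sigma> - S12\<close>.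
  For any \<open>v\<close>, its projection \<open>p = \<alpha> g + \<beta> d\<close> onto the plane of \<open>g, d\<close> satisfies
  \<open>u \<bullet> v = u \<bullet> p\<close> and \<open>\<parallel>p\<parallel> \<le> \<parallel>v\<parallel>\<close>, and expanding gives
  \<open>\<sigma> \<parallel>p\<parallel>\<^sup>2 - (u \<bullet> p)\<^sup>2 \<ge> \<parallel>A p\<parallel>\<^sup>2 \<ge> 0\<close>.
\<close>

lemma quadratic_nonpos_imp_le_larger_root:
  fixes a b c s :: real
  assumes "a > 0" and "a * s^2 + b * s + c \<le> 0"
  shows "discrim a b c \<ge> 0" and "s \<le> (- b + sqrt (discrim a b c)) / (2 * a)"
proof -
  have "(2 * a * s + b)^2 - discrim a b c = 4 * a * (a * s^2 + b * s + c)"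
    by (simp add: discrim_def power2_eq_square algebra_simps)
  also have "\<dots> \<le> 0" using assms by (simp add: mult_nonneg_nonpos)
  finally have sq_le: "(2 * a * s + b)^2 \<le> discrim a b c" by simp
  then show "discrim a b c \<ge> 0" by (meson order_trans zero_le_power2)
  from sq_le have "\<bar>2 * a * s + b\<bar> \<le> sqrt (discrim a b c)"
    using real_sqrt_le_mono by fastforce
  then show "s \<le> (- b + sqrt (discrim a b c)) / (2 * a)"
    using \<open>a > 0\<close> by (simp add: field_simps)
qed

lemma inner_transpose_mult_self:
  fixes A :: "real^'n^'m"
  shows "x \<bullet> ((transpose A ** A) *v y) = (A *v x) \<bullet> (A *v y)"
  by (metis dot_lmul_matrix matrix_vector_mul_assoc vector_transpose_matrix)

lemma outer_mult_vector: "outer u w *v v = (w \<bullet> v) *\<^sub>R (u::real^'n)"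
  by (simp add: vec_eq_iff outer_def matrix_vector_mult_def inner_vec_def sum_distrib_left
      algebra_simps)

lemma psd_scaled_id_minus_outer_iff:
  "psd (s *\<^sub>R mat 1 - outer u u) \<longleftrightarrow> (\<forall>v::real^'n. (u \<bullet> v)^2 \<le> s * (v \<bullet> v))"
proof -
  have "(s *\<^sub>R mat 1 - outer u u) *v v = s *\<^sub>R v - (u \<bullet> v) *\<^sub>R u" for v :: "real^'n"
    by (simp add: matrix_vector_mult_diff_rdistrib outer_mult_vector
        scaleR_matrix_vector_assoc[symmetric])
  then show ?thesis
    by (simp add: psd_def inner_diff_right power2_eq_square inner_commute)
qed

lemma gram_quadratic_form_nonneg:
  fixes x y :: "'a::real_inner"
  shows "0 \<le> \<alpha>^2 * (x \<bullet> x) + 2 * \<alpha> * \<beta> * (x \<bullet> y) + \<beta>^2 * (y \<bullet> y)"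
  using inner_ge_zero[of "\<alpha> *\<^sub>R x + \<beta> *\<^sub>R y"]
  by (simp add: inner_add_left inner_add_right inner_commute[of y x] power2_eq_square
      algebra_simps)

lemma exists_span2_same_inner:
  fixes g d v :: "'a::real_inner"
  assumes "(g \<bullet> g) * (d \<bullet> d) - (g \<bullet> d)^2 \<noteq> 0"
  obtains \<alpha> \<beta> where "(\<alpha> *\<^sub>R g + \<beta> *\<^sub>R d) \<bullet> g = v \<bullet> g"
    and "(\<alpha> *\<^sub>R g + \<beta> *\<^sub>R d) \<bullet> d = v \<bullet> d"
proof
  define D where "D = (g \<bullet> g) * (d \<bullet> d) - (g \<bullet> d)^2"
  define \<alpha> where "\<alpha> = ((v \<bullet> g) * (d \<bullet> d) - (v \<bullet> d) * (g \<bullet> d)) / D"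
  define \<beta> where "\<beta> = ((v \<bullet> d) * (g \<bullet> g) - (v \<bullet> g) * (g \<bullet> d)) / D"
  have "D \<noteq> 0" using assms by (simp add: D_def)
  have "\<alpha> * (g \<bullet> g) + \<beta> * (g \<bullet> d) = (v \<bullet> g) * D / D"
    "\<alpha> * (g \<bullet> d) + \<beta> * (d \<bullet> d) = (v \<bullet> d) * D / D"
    unfolding \<alpha>_def \<beta>_def D_def by (simp_all add: add_divide_distrib[symmetric] power2_eq_square
        algebra_simps)
  then have "\<alpha> * (g \<bullet> g) + \<beta> * (g \<bullet> d) = v \<bullet> g" "\<alpha> * (g \<bullet> d) + \<beta> * (d \<bullet> d) = v \<bullet> d"
    using \<open>D \<noteq> 0\<close> by simp_all
  then show "(\<alpha> *\<^sub>R g + \<beta> *\<^sub>R d) \<bullet> g = v \<bullet> g" "(\<alpha> *\<^sub>R g + \<beta> *\<^sub>R d) \<bullet> d = v \<bullet> d"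
    by (simp_all add: inner_add_left inner_commute[of d g])
qed

lemma inner_sq_le_of_plane_domination:
  fixes g d u v :: "'a::real_inner"
  assumes gram: "(g \<bullet> g) * (d \<bullet> d) - (g \<bullet> d)^2 \<noteq> 0"
    and u: "u = \<tau> *\<^sub>R g + \<rho> *\<^sub>R d"
    and "0 \<le> \<sigma>"
    and ug: "(u \<bullet> g)^2 = \<sigma> * (g \<bullet> g) - S11"
    and ugd: "(u \<bullet> g) * (u \<bullet> d) = \<sigma> * (g \<bullet> d) - S12"
    and ud: "(u \<bullet> d)^2 \<le> \<sigma> * (d \<bullet> d) - S22"
    and form: "\<And>\<alpha> \<beta>. 0 \<le> \<alpha>^2 * S11 + 2 * \<alpha> * \<beta> * S12 + \<beta>^2 * S22"
  shows "(u \<bullet> v)^2 \<le> \<sigma> * (v \<bullet> v)"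
proof -
  obtain \<alpha> \<beta> where pg: "(\<alpha> *\<^sub>R g + \<beta> *\<^sub>R d) \<bullet> g = v \<bullet> g"
    and pd: "(\<alpha> *\<^sub>R g + \<beta> *\<^sub>R d) \<bullet> d = v \<bullet> d"
    using exists_span2_same_inner[OF gram] .
  define p where "p = \<alpha> *\<^sub>R g + \<beta> *\<^sub>R d"
  have u_inner: "u \<bullet> x = \<tau> * (x \<bullet> g) + \<rho> * (x \<bullet> d)" for x
    by (simp add: u inner_add_left inner_commute[of g x] inner_commute[of d x])
  have "u \<bullet> v = u \<bullet> p"
    using pg pd by (simp add: u_inner p_def)
  have "v \<bullet> p = \<alpha> * (v \<bullet> g) + \<beta> * (v \<bullet> d)"
    by (simp add: p_def inner_add_right)
  also have "\<dots> = p \<bullet> p"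
    using pg pd by (simp add: p_def[symmetric]) (simp add: p_def inner_add_right)
  finally have "v \<bullet> p = p \<bullet> p" .
  then have "0 \<le> v \<bullet> v - p \<bullet> p"
    using inner_ge_zero[of "v - p"] by (simp add: inner_diff_left inner_diff_right inner_commute)
  then have "\<sigma> * (p \<bullet> p) \<le> \<sigma> * (v \<bullet> v)"
    using \<open>0 \<le> \<sigma>\<close> by (simp add: mult_left_mono)
  have "\<sigma> * (p \<bullet> p) - (u \<bullet> p)^2
      = \<alpha>^2 * (\<sigma> * (g \<bullet> g) - (u \<bullet> g)^2) + 2 * \<alpha> * \<beta> * (\<sigma> * (g \<bullet> d) - (u \<bullet> g) * (u \<bullet> d))
        + \<beta>^2 * (\<sigma> * (d \<bullet> d) - (u \<bullet> d)^2)"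
    by (simp add: p_def inner_add_left inner_add_right inner_commute[of d g]
        power2_eq_square algebra_simps)
  also have "\<dots> \<ge> \<alpha>^2 * S11 + 2 * \<alpha> * \<beta> * S12 + \<beta>^2 * S22"
    using ug ugd ud by (simp add: mult_left_mono)
  finally have "(u \<bullet> p)^2 \<le> \<sigma> * (p \<bullet> p)"
    using form[of \<alpha> \<beta>] by linarith
  with \<open>u \<bullet> v = u \<bullet> p\<close> \<open>\<sigma> * (p \<bullet> p) \<le> \<sigma> * (v \<bullet> v)\<close> show ?thesis
    by simp
qed

lemma secular_larger_root:
  fixes \<epsilon> S11 S12 S22 \<eta>1 \<eta>2 \<eta>3 \<sigma> :: real
  assumes "\<epsilon>^2 < 1"
    and h1: "\<eta>1 = 1 - \<epsilon>^2"
    and h2: "\<eta>2 = - S11 - S22 + 2 * \<epsilon> * S12"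
    and h3: "\<eta>3 = S11 * S22 - S12^2"
    and hsig: "\<sigma> = (- \<eta>2 + sqrt (\<eta>2^2 - 4 * \<eta>1 * \<eta>3)) / (2 * \<eta>1)"
  shows "S11 \<le> \<sigma>" and "S22 \<le> \<sigma>" and "(\<sigma> - S11) * (\<sigma> - S22) = (\<epsilon> * \<sigma> - S12)^2"
proof -
  have secular: "\<eta>1 * s^2 + \<eta>2 * s + \<eta>3 = (s - S11) * (s - S22) - (\<epsilon> * s - S12)^2" for s
    by (simp add: h1 h2 h3 power2_eq_square algebra_simps)
  have "\<eta>1 > 0" using \<open>\<epsilon>^2 < 1\<close> h1 by simp
  have \<sigma>: "\<sigma> = (- \<eta>2 + sqrt (discrim \<eta>1 \<eta>2 \<eta>3)) / (2 * \<eta>1)"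
    using hsig by (simp add: discrim_def)
  have S11_nonpos: "\<eta>1 * S11^2 + \<eta>2 * S11 + \<eta>3 \<le> 0"
    and S22_nonpos: "\<eta>1 * S22^2 + \<eta>2 * S22 + \<eta>3 \<le> 0"
    by (simp_all add: secular)
  show "S11 \<le> \<sigma>" "S22 \<le> \<sigma>"
    using quadratic_nonpos_imp_le_larger_root(2)[OF \<open>\<eta>1 > 0\<close>] S11_nonpos S22_nonpos \<sigma>
    by simp_all
  have "\<eta>1 * \<sigma>^2 + \<eta>2 * \<sigma> + \<eta>3 = 0"
    using discriminant_nonneg[of \<eta>1 \<eta>2 \<eta>3 \<sigma>] \<open>\<eta>1 > 0\<close> \<sigma>
      quadratic_nonpos_imp_le_larger_root(1)[OF \<open>\<eta>1 > 0\<close> S11_nonpos] by simp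
  then show "(\<sigma> - S11) * (\<sigma> - S22) = (\<epsilon> * \<sigma> - S12)^2"
    by (simp add: secular)
qed

theorem claim3:
  fixes A :: "real^'n^'m" and b :: "real^'m" and xk xk1 :: "real^'n"
    and g d :: "real^'n" and \<epsilon> S11 S12 S22 \<eta>1 \<eta>2 \<eta>3 \<sigma> \<tau> \<rho> :: real and u :: "real^'n"
  assumes hgrad: "lsq_grad A b xk \<noteq> 0"
    and hdiff: "xk \<noteq> xk1"
    and hg: "g = lsq_grad A b xk /\<^sub>R norm (lsq_grad A b xk)"
    and hd: "d = (xk - xk1) /\<^sub>R norm (xk - xk1)"
    and heps: "\<epsilon> = g \<bullet> d"
    and heps1: "\<epsilon>^2 < 1"
    and hS11: "S11 = g \<bullet> ((transpose A ** A) *v g)"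
    and hS12: "S12 = g \<bullet> ((transpose A ** A) *v d)"
    and hS22: "S22 = d \<bullet> ((transpose A ** A) *v d)"
    and h1: "\<eta>1 = 1 - \<epsilon>^2"
    and h2: "\<eta>2 = - S11 - S22 + 2 * \<epsilon> * S12"
    and h3: "\<eta>3 = S11 * S22 - S12^2"
    and hsig: "\<sigma> = (- \<eta>2 + sqrt (\<eta>2^2 - 4 * \<eta>1 * \<eta>3)) / (2 * \<eta>1)"
    and hsys1: "\<tau> + \<epsilon> * \<rho> = sqrt (\<sigma> - S11)"
    and hsys2: "\<epsilon> * \<tau> + \<rho> = sqrt (\<sigma> - S22) * sgn (\<epsilon> * \<sigma> - S12)"
    and hu: "u = \<tau> *\<^sub>R g + \<rho> *\<^sub>R d"
  shows "psd (\<sigma> *\<^sub>R mat 1 - outer u u)"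
proof -
  have "norm g = 1" and "norm d = 1"
    using hgrad hg hdiff hd by simp_all
  then have gg: "g \<bullet> g = 1" and dd: "d \<bullet> d = 1"
    by (simp_all add: dot_square_norm)
  have S: "S11 = (A *v g) \<bullet> (A *v g)" "S12 = (A *v g) \<bullet> (A *v d)" "S22 = (A *v d) \<bullet> (A *v d)"
    using hS11 hS12 hS22 by (simp_all add: inner_transpose_mult_self)
  have form: "0 \<le> \<alpha>^2 * S11 + 2 * \<alpha> * \<beta> * S12 + \<beta>^2 * S22" for \<alpha> \<beta>
    unfolding S by (rule gram_quadratic_form_nonneg)
  note \<sigma> = secular_larger_root[OF heps1 h1 h2 h3 hsig]
  have "u \<bullet> g = \<tau> + \<epsilon> * \<rho>" and "u \<bullet> d = \<epsilon> * \<tau> + \<rho>"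
    using gg dd by (simp_all add: hu heps inner_add_left inner_commute[of d g] mult.commute)
  then have ug: "u \<bullet> g = sqrt (\<sigma> - S11)" and ud: "u \<bullet> d = sqrt (\<sigma> - S22) * sgn (\<epsilon> * \<sigma> - S12)"
    using hsys1 hsys2 by simp_all
  have "(u \<bullet> g) * (u \<bullet> d) = \<bar>\<epsilon> * \<sigma> - S12\<bar> * sgn (\<epsilon> * \<sigma> - S12)"
    using \<sigma>(3) by (simp add: ug ud real_sqrt_mult[symmetric])
  then have ugd: "(u \<bullet> g) * (u \<bullet> d) = \<sigma> * (g \<bullet> d) - S12"
    by (simp add: abs_mult_sgn heps mult.commute)
  have gram: "(g \<bullet> g) * (d \<bullet> d) - (g \<bullet> d)^2 \<noteq> 0"
    using gg dd heps heps1 by simp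
  have ug2: "(u \<bullet> g)^2 = \<sigma> * (g \<bullet> g) - S11"
    using \<sigma>(1) gg by (simp add: ug)
  have ud2: "(u \<bullet> d)^2 \<le> \<sigma> * (d \<bullet> d) - S22"
    using \<sigma>(2) dd by (simp add: ud power_mult_distrib sgn_if)
  have "0 \<le> \<sigma>" using \<sigma>(1) S(1) by (meson inner_ge_zero order_trans)
  then show ?thesis
    unfolding psd_scaled_id_minus_outer_iff
    using inner_sq_le_of_plane_domination[OF gram hu _ ug2 ugd ud2 form] by blast
qed

end
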